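(* Let $q$ be a prime. For any integer $W\leqslant q$ and integers $a,h$ with $\gcd(ah,q)=1$ we have $$\sum_{w=1}^{W}\sum_{\substack{x\in\mathbb{F}_q\\ x^2=aw}}\mathbf{e}_q(hx)\ll q^{1/2+o(1)},$$ where $o(1)\to 0$ as $q\to\infty$.
   Context: $\mathbf{e}_q(\xi)=\exp(2\pi i\xi/q)$; $\mathbb{F}_q$ is identified with $\{0,\dots,q-1\}$. The implied constant is absolute. *)

theory Defs
  imports "HOL-Analysis.Analysis"
begin

definition eq :: "nat \<Rightarrow> int \<Rightarrow> complex" where
  "eq q \<xi> = exp (2 * of_real pi * \<i> * of_int \<xi> / of_nat q)"

definition S :: "nat \<Rightarrow> int \<Rightarrow> int \<Rightarrow> int \<Rightarrow> complex" where
  "S q W a h = (\<Sum>w\<in>{1..W}. \<Sum>x\<in>{x\<in>{0..<int q}. x^2 mod int q = (a * w) mod int q}. eq q (h * x))"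

end

theory Submission
  imports Defs "HOL-Analysis.Harmonic_Numbers" "HOL-Real_Asymp.Real_Asymp"
begin

text \<open>
  Detect the condition x^2 = a w by orthogonality of additive characters. With b the inverse
  of a modulo q this completes the sum into (1/q) \<Sum>_t A(t) G(t), where
  A(t) = \<Sum>_{w \<le> W} e_q(-t w) is a geometric sum of size at most 1/sin(\<pi> t/q) and
  G(t) = \<Sum>_x e_q(t b x^2 + h x) is a quadratic Gauss sum. For odd q and t \<noteq> 0 one has
  |G(t)| = sqrt q, while G(0) = 0 because q does not divide h. Summing
  1/sin(\<pi> t/q) \<le> q/(2t) + q/(2(q-t)) over t gives |S| \<le> sqrt q (1 + ln q), which is
  q^(1/2 + \<epsilon>(q)) for \<epsilon>(q) = ln (1 + ln q) / ln q.
\<close>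

section \<open>Additive characters modulo q\<close>

lemma eq_add: "eq q (a + b) = eq q a * eq q b"
  unfolding eq_def by (simp add: distrib_left add_divide_distrib exp_add[symmetric])

lemma eq_uminus: "eq q (- a) = cnj (eq q a)"
  unfolding eq_def by (simp add: exp_cnj)

lemma eq_0 [simp]: "eq q 0 = 1"
  by (simp add: eq_def)

lemma norm_eq [simp]: "norm (eq q a) = 1"
  unfolding eq_def by (simp add: norm_exp)

lemma eq_mult_of_nat: "eq q (k * int n) = eq q k ^ n"
  unfolding eq_def by (simp add: exp_of_nat_mult[symmetric] field_simps)

lemma eq_eq_1_iff:
  assumes "q > 0"
  shows "eq q k = 1 \<longleftrightarrow> int q dvd k"
proof
  assume "eq q k = 1"
  then obtain n :: int where "2 * pi * k / q = of_int (2 * n) * pi"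
    unfolding eq_def exp_eq_1 by auto
  then have "real_of_int k = real_of_int (n * int q)"
    using assms by (simp add: field_simps)
  then show "int q dvd k"
    by (metis dvd_triv_right of_int_eq_iff)
next
  assume "int q dvd k"
  then obtain m where "k = int q * m" by auto
  then have "2 * of_real pi * \<i> * of_int k / of_nat q = 2 * of_real pi * \<i> * of_int m"
    using assms by simp
  then show "eq q k = 1"
    unfolding eq_def by (simp add: exp_eq_1)
qed

lemma eq_cong:
  assumes "q > 0" "a mod int q = b mod int q"
  shows "eq q a = eq q b"
proof -
  have "int q dvd a - b"
    using assms(2) by (simp add: mod_eq_dvd_iff)
  then have "eq q (a - b) = 1"
    using eq_eq_1_iff[OF assms(1)] by simp
  then show ?thesis
    using eq_add[of q b "a - b"] by simp
qed

lemma eq_orthogonality_nat: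
  assumes "q > 0"
  shows "(\<Sum>n<q. eq q (k * int n)) = (if int q dvd k then of_nat q else 0)"
proof (cases "int q dvd k")
  case True
  then have "eq q k = 1"
    using eq_eq_1_iff[OF assms] by simp
  with True show ?thesis
    by (simp add: eq_mult_of_nat)
next
  case False
  have "eq q k ^ q = 1"
    using eq_eq_1_iff[OF assms, of "k * int q"] by (simp add: eq_mult_of_nat)
  with False show ?thesis
    using eq_eq_1_iff[OF assms] by (simp add: eq_mult_of_nat geometric_sum)
qed

lemma sum_residues_eq_sum_lessThan: "(\<Sum>x\<in>{0..<int q}. g x) = (\<Sum>n<q. g (int n))"
proof -
  have "{0..<int q} = int ` {..<q}"
    using image_int_atLeastLessThan[of 0 q] by (simp add: lessThan_atLeast0)
  then show ?thesis
    by (simp add: sum.reindex)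
qed

lemma eq_orthogonality:
  assumes "q > 0"
  shows "(\<Sum>x\<in>{0..<int q}. eq q (k * x)) = (if int q dvd k then of_nat q else 0)"
  using eq_orthogonality_nat[OF assms] by (simp add: sum_residues_eq_sum_lessThan)

lemma sum_residues_shift:
  assumes "q > 0" and periodic: "\<And>x. g (x mod int q) = g x"
  shows "(\<Sum>x\<in>{0..<int q}. g x) = (\<Sum>d\<in>{0..<int q}. g (y + d))"
proof -
  have "(\<Sum>d\<in>{0..<int q}. g ((y + d) mod int q)) = (\<Sum>x\<in>{0..<int q}. g x)"
  proof (rule sum.reindex_bij_witness[where i = "\<lambda>x. (x - y) mod int q" and j = "\<lambda>d. (y + d) mod int q"])
    fix d :: int
    assume "d \<in> {0..<int q}"
    then show "((y + d) mod int q - y) mod int q = d"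
      by (metis add_diff_cancel_left' mod_diff_left_eq mod_pos_pos_trivial atLeastLessThan_iff)
    show "(y + d) mod int q \<in> {0..<int q}"
      using assms(1) by simp
  next
    fix x :: int
    assume "x \<in> {0..<int q}"
    then show "(y + (x - y) mod int q) mod int q = x"
      by (metis add.commute diff_add_cancel mod_add_right_eq mod_pos_pos_trivial atLeastLessThan_iff)
    show "(x - y) mod int q \<in> {0..<int q}"
      using assms(1) by simp
  qed (rule refl)
  then show ?thesis
    using periodic by simp
qed

section \<open>Quadratic Gauss sums\<close>

definition gauss_sum :: "nat \<Rightarrow> int \<Rightarrow> int \<Rightarrow> complex" where
  "gauss_sum q c h = (\<Sum>x\<in>{0..<int q}. eq q (c * x^2 + h * x))"

lemma gauss_sum_0:
  assumes "q > 0" "\<not> int q dvd h"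
  shows "gauss_sum q 0 h = 0"
  using eq_orthogonality[OF assms(1), of h] assms(2) by (simp add: gauss_sum_def)

lemma norm_square_gauss_sum:
  assumes q: "q > 0"
  shows "complex_of_real ((norm (gauss_sum q c h))^2)
    = (\<Sum>d\<in>{0..<int q}. eq q (c * d^2 + h * d) * (\<Sum>y\<in>{0..<int q}. eq q (2 * c * d * y)))"
proof -
  define f where "f x = c * x^2 + h * x" for x :: int
  have "f (x mod int q) mod int q = f x mod int q" for x
    unfolding f_def by (metis mod_add_cong mod_mult_right_eq power_mod)
  then have periodic: "(f (x mod int q) - f y) mod int q = (f x - f y) mod int q" for x y
    by (rule mod_diff_cong) simp
  have difference: "f (y + d) - f y = f d + 2 * c * d * y" for y d
    unfolding f_def by (simp add: power2_eq_square algebra_simps)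
  let ?G = "gauss_sum q c h"
  have "complex_of_real ((norm ?G)^2) = ?G * cnj ?G"
    by (rule complex_norm_square)
  also have "\<dots> = (\<Sum>x\<in>{0..<int q}. \<Sum>y\<in>{0..<int q}. eq q (f x) * eq q (- f y))"
    by (simp add: gauss_sum_def f_def[symmetric] sum_product eq_uminus)
  also have "\<dots> = (\<Sum>y\<in>{0..<int q}. \<Sum>x\<in>{0..<int q}. eq q (f x - f y))"
    by (subst sum.swap) (simp add: eq_add[symmetric])
  also have "\<dots> = (\<Sum>y\<in>{0..<int q}. \<Sum>d\<in>{0..<int q}. eq q (f (y + d) - f y))"
    by (intro sum.cong refl sum_residues_shift q eq_cong periodic)
  also have "\<dots> = (\<Sum>y\<in>{0..<int q}. \<Sum>d\<in>{0..<int q}. eq q (f d) * eq q (2 * c * d * y))"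
    by (simp only: difference eq_add)
  also have "\<dots> = (\<Sum>d\<in>{0..<int q}. eq q (f d) * (\<Sum>y\<in>{0..<int q}. eq q (2 * c * d * y)))"
    by (subst sum.swap) (simp add: sum_distrib_left)
  finally show ?thesis
    by (simp add: f_def)
qed

lemma norm_gauss_sum:
  assumes q: "prime q" "q \<noteq> 2" and c: "\<not> int q dvd c"
  shows "norm (gauss_sum q c h) = sqrt q"
proof -
  have q0: "q > 0"
    using q prime_gt_0_nat by blast
  have "\<not> int q dvd 2"
    using q prime_ge_2_nat[OF q(1)] by (auto dest: zdvd_imp_le)
  then have "int q dvd 2 * c * d \<longleftrightarrow> int q dvd d" for d
    using q(1) c by (simp add: prime_dvd_mult_iff)
  moreover have "int q dvd d \<longleftrightarrow> d = 0" if "d \<in> {0..<int q}" for d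
    using that by (auto dest: zdvd_imp_le)
  ultimately have "complex_of_real ((norm (gauss_sum q c h))^2)
      = (\<Sum>d\<in>{0..<int q}. if d = 0 then of_nat q else 0)"
    unfolding norm_square_gauss_sum[OF q0]
    by (intro sum.cong refl) (simp add: eq_orthogonality[OF q0])
  also have "\<dots> = complex_of_real (real q)"
    using q0 by simp
  finally show ?thesis
    by (metis norm_ge_zero of_real_eq_iff real_sqrt_unique)
qed

section \<open>Incomplete linear sums\<close>

lemma norm_geometric_sum_le:
  fixes z :: "'a::real_normed_field"
  assumes "norm z = 1" "z \<noteq> 1"
  shows "norm (\<Sum>k<n. z ^ k) \<le> 2 / norm (z - 1)"
proof -
  have "norm (z ^ n - 1) \<le> 2"
    using norm_triangle_ineq4[of "z ^ n" 1] assms(1) by (simp add: norm_power)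
  then show ?thesis
    using assms(2) by (simp add: geometric_sum norm_divide divide_right_mono)
qed

lemma norm_eq_minus_1: "norm (eq q k - 1) = 2 * \<bar>sin (pi * k / q)\<bar>"
proof -
  have "eq q k = exp (\<i> * of_real (2 * (pi * k / q)))"
    unfolding eq_def by (simp add: field_simps)
  then show ?thesis
    by (simp only: dist_exp_i_1) simp
qed

lemma norm_sum_eq_interval_le:
  assumes q: "q > 0" and k: "\<not> int q dvd k"
  shows "norm (\<Sum>w\<in>{1..W}. eq q (k * w)) \<le> 1 / \<bar>sin (pi * k / q)\<bar>"
proof (cases "W \<le> 0")
  case True
  then show ?thesis
    by simp
next
  case False
  define n where "n = nat W"
  have W: "W = int n"
    using False by (simp add: n_def)
  define z where "z = eq q k"
  have z: "norm z = 1" "z \<noteq> 1"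
    using eq_eq_1_iff[OF q] k by (auto simp: z_def)
  have "{1..W} = int ` {1..n}"
    by (simp add: W image_int_atLeastAtMost)
  then have "(\<Sum>w\<in>{1..W}. eq q (k * w)) = (\<Sum>j\<in>{1..n}. z ^ j)"
    by (simp add: sum.reindex z_def eq_mult_of_nat)
  also have "\<dots> = z * (\<Sum>j<n. z ^ j)"
    by (simp add: sum.atLeast1_atMost_eq sum_distrib_left)
  finally have "norm (\<Sum>w\<in>{1..W}. eq q (k * w)) \<le> 2 / norm (z - 1)"
    using norm_geometric_sum_le[OF z] z(1) by (simp add: norm_mult)
  then show ?thesis
    by (simp add: z_def norm_eq_minus_1)
qed

lemma jordan_inequality:
  assumes "0 \<le> x" "x \<le> pi / 2"
  shows "2 / pi * x \<le> sin x"
proof -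
  have "convex_on {0..pi} (\<lambda>x. - sin x)"
  proof (rule convex_on_realI[where f' = "\<lambda>x. - cos x"])
    fix x
    show "((\<lambda>x. - sin x) has_real_derivative - cos x) (at x)"
      by (auto intro!: derivative_eq_intros)
  next
    fix x y
    assume "x \<in> {0..pi}" "y \<in> {0..pi}" "x \<le> y"
    then show "- cos x \<le> - cos y"
      using cos_monotone_0_pi_le by auto
  qed simp
  moreover define t where "t = 2 / pi * x"
  moreover have "0 \<le> t" "t \<le> 1"
    using assms pi_gt_zero by (auto simp: t_def field_simps)
  ultimately have "- sin ((1 - t) *\<^sub>R 0 + t *\<^sub>R (pi / 2)) \<le> (1 - t) * (- sin 0) + t * (- sin (pi / 2))"
    by (intro convex_onD) auto
  then show ?thesis
    by (simp add: t_def)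
qed

lemma inverse_sin_pi_le:
  fixes t q :: nat
  assumes "0 < t" "t < q"
  shows "1 / sin (pi * t / q) \<le> q / (2 * real t) + q / (2 * real (q - t))"
proof -
  have bound: "1 / sin (pi * t / q) \<le> q / (2 * m)"
    if m: "0 < m" "2 * m \<le> q" and sin_eq: "sin (pi * t / q) = sin (pi * m / q)" for m :: nat
  proof -
    have "2 / pi * (pi * m / q) \<le> sin (pi * m / q)"
      using m pi_gt_zero by (intro jordan_inequality) (auto simp: field_simps)
    then have "2 * m / q \<le> sin (pi * t / q)"
      using sin_eq by simp
    then have "inverse (sin (pi * t / q)) \<le> inverse (2 * m / q)"
      using m by (intro le_imp_inverse_le) auto
    then show ?thesis
      by (simp add: inverse_eq_divide)
  qed
  show ?thesis
  proof (cases "2 * t \<le> q")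
    case True
    then show ?thesis
      using bound[of t] assms by (simp add: add_increasing2)
  next
    case False
    have "sin (pi * t / q) = sin (pi - pi * t / q)"
      by simp
    also have "pi - pi * t / q = pi * real (q - t) / q"
      using assms by (simp add: field_simps of_nat_diff)
    finally show ?thesis
      using bound[of "q - t"] False assms by (simp add: add_increasing)
  qed
qed

lemma harm_le_1_plus_ln: "harm n \<le> 1 + ln (real n + 1)"
proof (cases "n = 0")
  case False
  then have "harm n - ln (real n) \<le> harm 1 - ln (real 1)"
    by (intro euler_mascheroni_sequence_decreasing) auto
  moreover have "ln (real n) \<le> ln (real n + 1)"
    using False by simp
  ultimately show ?thesis
    by (simp add: harm_def)
qed (simp add: harm_def)

lemma sum_inverse_sin_pi_le:
  fixes q :: nat
  assumes "q > 0"
  shows "(\<Sum>t\<in>{1..<q}. 1 / sin (pi * t / q)) \<le> q * (1 + ln q)"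
proof -
  have reflect: "(\<Sum>t\<in>{1..<q}. q / (2 * real (q - t))) = (\<Sum>t\<in>{1..<q}. q / (2 * real t))"
    using sum.atLeastLessThan_rev[of "\<lambda>t. q / (2 * real t)" 1 q] by simp
  have "{1..<q} = {1..q - 1}"
    using assms by auto
  then have harm: "(\<Sum>t\<in>{1..<q}. 1 / real t) = harm (q - 1)"
    by (simp add: harm_def inverse_eq_divide)
  have "(\<Sum>t\<in>{1..<q}. 1 / sin (pi * t / q)) \<le> (\<Sum>t\<in>{1..<q}. q / (2 * real t) + q / (2 * real (q - t)))"
    by (intro sum_mono inverse_sin_pi_le) auto
  also have "\<dots> = (\<Sum>t\<in>{1..<q}. q / (2 * real t)) + (\<Sum>t\<in>{1..<q}. q / (2 * real t))"
    by (simp only: sum.distrib reflect)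
  also have "\<dots> = q * (\<Sum>t\<in>{1..<q}. 1 / real t)"
    by (simp add: sum_distrib_left sum.distrib[symmetric])
  also have "\<dots> = q * harm (q - 1)"
    by (simp only: harm)
  also have "\<dots> \<le> q * (1 + ln q)"
    using harm_le_1_plus_ln[of "q - 1"] assms by (intro mult_left_mono) (auto simp: of_nat_diff)
  finally show ?thesis .
qed

section \<open>Completion\<close>

lemma ex_inverse_mod:
  fixes a m :: int
  assumes "coprime a m"
  shows "\<exists>b. m dvd a * b - 1"
proof -
  obtain b v where "b * a + v * m = 1"
    using bezout_int[of a m] assms by auto
  then have "a * b - 1 = m * (- v)"
    by (simp add: algebra_simps)
  then show ?thesis
    by (metis dvd_triv_left)
qed

lemma mod_eq_mult_iff_dvd:
  fixes m a b y w :: int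
  assumes inverse: "m dvd a * b - 1"
  shows "y mod m = (a * w) mod m \<longleftrightarrow> m dvd b * y - w"
proof
  assume "y mod m = (a * w) mod m"
  then have "m dvd b * (y - a * w) + (a * b - 1) * w"
    using inverse by (simp add: mod_eq_dvd_iff)
  then show "m dvd b * y - w"
    by (simp add: algebra_simps)
next
  assume "m dvd b * y - w"
  then have "m dvd a * (b * y - w) - (a * b - 1) * y"
    using inverse by simp
  then show "y mod m = (a * w) mod m"
    by (simp add: mod_eq_dvd_iff algebra_simps)
qed

lemma S_completion:
  assumes q: "q > 0" and inverse: "int q dvd a * b - 1"
  shows "S q W a h
    = (\<Sum>t<q. (\<Sum>w\<in>{1..W}. eq q (- int t * w)) * gauss_sum q (int t * b) h) / of_nat q"
proof -
  have detect: "(\<Sum>x\<in>{x\<in>{0..<int q}. x^2 mod int q = (a * w) mod int q}. eq q (h * x))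
      = (\<Sum>x\<in>{0..<int q}. eq q (h * x) * (\<Sum>t<q. eq q ((b * x^2 - w) * int t))) / of_nat q" for w
  proof -
    have "(\<Sum>x\<in>{x\<in>{0..<int q}. x^2 mod int q = (a * w) mod int q}. eq q (h * x))
        = (\<Sum>x\<in>{0..<int q}. if int q dvd b * x^2 - w then eq q (h * x) else 0)"
      by (simp only: sum.inter_filter[OF finite_atLeastLessThan_int] mod_eq_mult_iff_dvd[OF inverse])
    also have "\<dots> = (\<Sum>x\<in>{0..<int q}. eq q (h * x) * (\<Sum>t<q. eq q ((b * x^2 - w) * int t)) / of_nat q)"
      using q by (intro sum.cong refl) (simp add: eq_orthogonality_nat)
    finally show ?thesis
      by (simp add: sum_divide_distrib)
  qed
  have phase: "eq q (- int t * w) * eq q (int t * b * x^2 + h * x) = eq q (h * x) * eq q ((b * x^2 - w) * int t)"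
    for t w x
  proof -
    have "- int t * w + (int t * b * x^2 + h * x) = h * x + (b * x^2 - w) * int t"
      by (simp add: algebra_simps)
    then show ?thesis
      by (metis eq_add)
  qed
  have "(\<Sum>t<q. (\<Sum>w\<in>{1..W}. eq q (- int t * w)) * gauss_sum q (int t * b) h)
      = (\<Sum>t<q. \<Sum>w\<in>{1..W}. \<Sum>x\<in>{0..<int q}. eq q (h * x) * eq q ((b * x^2 - w) * int t))"
    by (simp only: gauss_sum_def sum_product phase)
  also have "\<dots> = (\<Sum>w\<in>{1..W}. \<Sum>t<q. \<Sum>x\<in>{0..<int q}. eq q (h * x) * eq q ((b * x^2 - w) * int t))"
    by (rule sum.swap)
  also have "\<dots> = (\<Sum>w\<in>{1..W}. \<Sum>x\<in>{0..<int q}. \<Sum>t<q. eq q (h * x) * eq q ((b * x^2 - w) * int t))"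
    by (rule sum.cong[OF refl], rule sum.swap)
  also have "\<dots> = (\<Sum>w\<in>{1..W}. \<Sum>x\<in>{0..<int q}. eq q (h * x) * (\<Sum>t<q. eq q ((b * x^2 - w) * int t)))"
    by (simp add: sum_distrib_left)
  finally show ?thesis
    unfolding S_def detect by (simp add: sum_divide_distrib)
qed

lemma norm_S_le_odd_prime:
  assumes q: "prime q" "q \<noteq> 2" and coprime: "coprime (a * h) (int q)"
  shows "norm (S q W a h) \<le> sqrt q * (1 + ln q)"
proof -
  have q0: "q > 0" and q1: "q > 1"
    using prime_gt_1_nat[OF q(1)] by auto
  have "coprime a (int q)" "coprime h (int q)"
    using coprime by simp_all
  then have h: "\<not> int q dvd h"
    using q1 coprime_common_divisor[of h "int q" "int q"] by auto
  obtain b where inverse: "int q dvd a * b - 1"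
    using ex_inverse_mod \<open>coprime a (int q)\<close> by blast
  have b: "\<not> int q dvd b"
  proof
    assume "int q dvd b"
    then have "int q dvd a * b"
      by simp
    then have "int q dvd a * b - (a * b - 1)"
      using inverse by (rule dvd_diff)
    then show False
      using q1 by simp
  qed
  define A where "A t = (\<Sum>w\<in>{1..W}. eq q (- int t * w))" for t :: nat
  define G where "G t = gauss_sum q (int t * b) h" for t :: nat
  have G0: "G 0 = 0"
    using gauss_sum_0[OF q0 h] by (simp add: G_def)
  have AG: "norm (A t * G t) \<le> 1 / sin (pi * t / q) * sqrt q" if t: "t \<in> {1..<q}" for t
  proof -
    have "\<not> int q dvd int t * b"
      using t b q(1) by (auto simp: prime_dvd_mult_iff dest: zdvd_imp_le)
    then have "norm (G t) = sqrt q"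
      unfolding G_def by (rule norm_gauss_sum[OF q])
    moreover have "norm (A t) \<le> 1 / sin (pi * t / q)"
    proof -
      have "\<not> int q dvd - int t"
        using t by (auto dest: zdvd_imp_le)
      moreover have "0 < sin (pi * t / q)"
        using t by (intro sin_gt_zero) (auto simp: field_simps)
      ultimately show ?thesis
        using norm_sum_eq_interval_le[OF q0, of "- int t" W] by (simp add: A_def)
    qed
    ultimately show ?thesis
      using mult_right_mono[of "norm (A t)" "1 / sin (pi * t / q)" "sqrt q"] by (simp add: norm_mult)
  qed
  have "norm (S q W a h) \<le> (\<Sum>t<q. norm (A t * G t)) / q"
    unfolding S_completion[OF q0 inverse] A_def G_def
    by (simp add: norm_divide divide_right_mono norm_sum)
  also have "\<dots> = (\<Sum>t\<in>{1..<q}. norm (A t * G t)) / q"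
    using q0 by (simp add: lessThan_atLeast0 sum.atLeast_Suc_lessThan G0)
  also have "\<dots> \<le> (\<Sum>t\<in>{1..<q}. 1 / sin (pi * t / q) * sqrt q) / q"
    by (intro divide_right_mono sum_mono AG) auto
  also have "\<dots> = (\<Sum>t\<in>{1..<q}. 1 / sin (pi * t / q)) * sqrt q / q"
    by (simp only: sum_distrib_right)
  also have "\<dots> \<le> q * (1 + ln q) * sqrt q / q"
    using sum_inverse_sin_pi_le[OF q0] by (intro divide_right_mono mult_right_mono) auto
  also have "\<dots> = sqrt q * (1 + ln q)"
    using q0 by simp
  finally show ?thesis .
qed

lemma norm_S_le_trivial: "norm (S q W a h) \<le> nat W * q"
proof -
  have inner: "norm (\<Sum>x\<in>{x\<in>{0..<int q}. x^2 mod int q = (a * w) mod int q}. eq q (h * x)) \<le> q" for w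
  proof -
    have "norm (\<Sum>x\<in>{x\<in>{0..<int q}. x^2 mod int q = (a * w) mod int q}. eq q (h * x))
        \<le> card {x\<in>{0..<int q}. x^2 mod int q = (a * w) mod int q}"
      using norm_sum[of "\<lambda>x. eq q (h * x)"] by simp
    also have "\<dots> \<le> card {0..<int q}"
      by (intro of_nat_mono card_mono) auto
    finally show ?thesis
      by simp
  qed
  have "norm (S q W a h)
      \<le> (\<Sum>w\<in>{1..W}. norm (\<Sum>x\<in>{x\<in>{0..<int q}. x^2 mod int q = (a * w) mod int q}. eq q (h * x)))"
    unfolding S_def by (rule norm_sum)
  also have "\<dots> \<le> (\<Sum>w\<in>{1..W}. real q)"
    by (rule sum_mono) (rule inner)
  finally show ?thesis
    by simp
qed

lemma norm_S_le_sqrt_log: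
  assumes q: "prime q" and W: "W \<le> int q" and coprime: "coprime (a * h) (int q)"
  shows "norm (S q W a h) \<le> 3 * (sqrt q * (1 + ln q))"
proof (cases "q = 2")
  case True
  have "norm (S q W a h) \<le> nat W * q"
    by (rule norm_S_le_trivial)
  also have "\<dots> \<le> 3 * (1 * (1 + 2 / 3))"
    using W True by simp
  also have "\<dots> \<le> 3 * (sqrt q * (1 + ln q))"
    using True ln2_ge_two_thirds by (intro mult_left_mono mult_mono) auto
  finally show ?thesis .
next
  case False
  have "0 \<le> sqrt q * (1 + ln q)"
    using prime_gt_1_nat[OF q] by simp
  then show ?thesis
    using norm_S_le_odd_prime[OF q False coprime, of W] by linarith
qed

lemma powr_half_plus_ln_ratio:
  fixes x :: real
  assumes "x > 1"
  shows "x powr (1/2 + ln (1 + ln x) / ln x) = sqrt x * (1 + ln x)"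
proof -
  have "x powr (ln (1 + ln x) / ln x) = exp (ln (1 + ln x))"
    using assms by (simp add: powr_def)
  also have "\<dots> = 1 + ln x"
    using assms by (simp add: add_pos_nonneg)
  finally show ?thesis
    using assms by (simp add: powr_add powr_half_sqrt)
qed

theorem lemma3p2:
  shows "\<exists>C>0. \<exists>\<epsilon>::nat \<Rightarrow> real. \<epsilon> \<longlonglongrightarrow> 0 \<and>
    (\<forall>q W a h. prime q \<longrightarrow> W \<le> int q \<longrightarrow> coprime (a * h) (int q) \<longrightarrow>
       norm (S q W a h) \<le> C * real q powr (1/2 + \<epsilon> q))"
proof (intro exI conjI allI impI)
  show "(3::real) > 0"
    by simp
  show "(\<lambda>q::nat. ln (1 + ln (real q)) / ln (real q)) \<longlonglongrightarrow> 0"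
    by real_asymp
  fix q :: nat and W a h :: int
  assume "prime q" "W \<le> int q" "coprime (a * h) (int q)"
  then show "norm (S q W a h) \<le> 3 * real q powr (1/2 + ln (1 + ln (real q)) / ln (real q))"
    using norm_S_le_sqrt_log powr_half_plus_ln_ratio[of q] prime_gt_1_nat by simp
qed

end
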